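(* Let $P\subseteq\mathbb{R}^n$ be an $n$-dimensional rational simplex with vertices $v_0,\dots,v_n$, and let $a_i$ be the lattice distance of $v_i$ from the facet of $P$ not containing $v_i$. Then \[\tau(P)=\mu(P)=\sum_{i=0}^n\frac{1}{a_i}.\]
   Context: Write $P$ irredundantly as $\{x:\langle c_j,x\rangle\ge b_j\}$ with primitive $c_j\in(\mathbb{Z}^n)^*$, each inequality defining a facet $F_j$; the lattice distance of $y$ from $F_j$ is $d_{F_j}(y):=\langle c_j,y\rangle-b_j$, and $d_P(y):=\min_j d_{F_j}(y)$. $P^{(s)}:=\{y:d_P(y)\ge s\}$, $\mu(P):=(\sup\{s>0:P^{(s)}\neq\emptyset\})^{-1}$, and $\tau(P):=(\sup\{s>0:\mathcal{N}(P^{(s)})=\mathcal{N}(P)\})^{-1}$, where $\mathcal{N}$ denotes the inner normal fan. *)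

theory Defs
  imports "HOL-Analysis.Analysis"
begin

text \<open>Vectors in R^n are modelled as real^'n; the dual lattice is identified with
  the integer vectors via the standard inner product.\<close>

definition primitive_int_vec :: "real^'n \<Rightarrow> bool" where
  "primitive_int_vec c \<longleftrightarrow> (\<forall>i. c$i \<in> \<int>) \<and>
     (\<forall>k::int. k > 1 \<longrightarrow> (\<exists>i. c$i / of_int k \<notin> \<int>))"

definition facet_ineq :: "(real^'n) set \<Rightarrow> (real^'n) set \<Rightarrow> real^'n \<Rightarrow> real \<Rightarrow> bool" where
  "facet_ineq P F c b \<longleftrightarrow> F facet_of P \<and> primitive_int_vec c \<and>
     P \<subseteq> {x. b \<le> c \<bullet> x} \<and> F = P \<inter> {x. c \<bullet> x = b}"

definition lattice_dist :: "(real^'n) set \<Rightarrow> (real^'n) set \<Rightarrow> real^'n \<Rightarrow> real" where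
  "lattice_dist P F y = (THE d. \<exists>c b. facet_ineq P F c b \<and> d = c \<bullet> y - b)"

definition dP :: "(real^'n) set \<Rightarrow> real^'n \<Rightarrow> real" where
  "dP P y = Inf ((\<lambda>F. lattice_dist P F y) ` {F. F facet_of P})"

definition layer :: "(real^'n) set \<Rightarrow> real \<Rightarrow> (real^'n) set" where
  "layer P s = {y. s \<le> dP P y}"

definition normal_cone :: "(real^'n) set \<Rightarrow> (real^'n) set \<Rightarrow> (real^'n) set" where
  "normal_cone Q F = {u. \<forall>y\<in>F. \<forall>x\<in>Q. u \<bullet> y \<le> u \<bullet> x}"

definition normal_fan :: "(real^'n) set \<Rightarrow> (real^'n) set set" where
  "normal_fan Q = {normal_cone Q F | F. F face_of Q \<and> F \<noteq> {}}"

definition mu :: "(real^'n) set \<Rightarrow> real" where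
  "mu P = inverse (Sup {s. s > 0 \<and> layer P s \<noteq> {}})"

definition tau :: "(real^'n) set \<Rightarrow> real" where
  "tau P = inverse (Sup {s. s > 0 \<and> normal_fan (layer P s) = normal_fan P})"

end

theory Submission
  imports Defs
begin

text \<open>In barycentric coordinates \<lambda>_0, ..., \<lambda>_n of the simplex, the facet F_i is {\<lambda>_i = 0},
  and every facet inequality of F_i is a positive multiple of \<lambda>_i \<ge> 0. Rationality of the
  vertices makes the linear part of \<lambda>_i rational, so exactly one such multiple is primitive
  integral, and therefore d_{F_i} = a_i \<lambda>_i. Thus P^(s) = {\<lambda>_i \<ge> s / a_i for all i}; summing over i
  shows that it is empty once s \<Sigma> 1/a_i > 1, while for smaller s > 0 it is the image of P under
  the homothety of ratio 1 - s \<Sigma> 1/a_i centred at the point with \<lambda>_i = 1 / (a_i \<Sigma> 1/a_j).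
  Homotheties preserve the normal fan, so both suprema equal 1 / \<Sigma> 1/a_i.\<close>

section \<open>Rational matrices and simplex edges\<close>

lemma det_Rats:
  fixes A :: "real^'n^'n"
  assumes "\<And>i j. A$i$j \<in> \<rat>"
  shows "det A \<in> \<rat>"
  unfolding det_def
  by (intro Rats_sum Rats_mult Rats_prod assms) auto

lemma right_inverse_Rats:
  fixes A B :: "real^'n^'n"
  assumes AB: "A ** B = mat 1" and rat: "\<And>i j. A$i$j \<in> \<rat>"
  shows "B$i$j \<in> \<rat>"
proof -
  let ?e = "axis j (1::real)"
  have "invertible A" using AB invertible_right_inverse by blast
  then have detA: "det A \<noteq> 0" by (simp add: invertible_det_nz)
  have Be: "A *v (B *v ?e) = ?e" by (simp add: matrix_vector_mul_assoc AB)
  have "det (\<chi> r c. if c = i then ?e$r else A$r$c) = (B *v ?e)$i * det A"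
    using cramer_lemma[where A=A and k=i and x="B *v ?e"] unfolding Be .
  moreover have "(B *v ?e)$i = B$i$j"
    by (simp add: matrix_vector_mult_def axis_def if_distrib cong: if_cong)
  ultimately have "B$i$j = det (\<chi> r c. if c = i then ?e$r else A$r$c) / det A"
    using detA by (simp add: field_simps)
  moreover have "det (\<chi> r c. if c = i then ?e$r else A$r$c) \<in> \<rat>"
    by (rule det_Rats) (simp add: axis_def rat)
  ultimately show ?thesis using det_Rats[OF rat] by simp
qed

lemma simplex_edge_matrix_invertible:
  fixes v :: "nat \<Rightarrow> real^'n" and g :: "'n \<Rightarrow> nat"
  assumes g: "bij_betw g UNIV {1..CARD('n)}"
    and inj: "inj_on v {..CARD('n)}"
    and indep: "\<not> affine_dependent (v ` {..CARD('n)})"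
  shows "invertible (\<chi> r c. (v (g c) - v 0) $ r)" (is "invertible ?A")
proof -
  let ?N = "CARD('n)"
  let ?S = "(\<lambda>x. - v 0 + x) ` v ` {1..?N}"
  have vertices: "v ` {..?N} = insert (v 0) (v ` {1..?N})"
    by (auto simp: image_iff) (metis atLeastAtMost_iff not_less_eq_eq le0 not0_implies_Suc)
  have v0: "v 0 \<notin> v ` {1..?N}"
    using inj by (force simp: inj_on_def)
  have "independent ?S"
    using indep affine_dependent_iff_dependent[OF v0] by (simp add: vertices)
  moreover have "card ?S = ?N"
    using inj by (simp add: card_image inj_on_subset inj_on_def)
  ultimately have "span ?S = UNIV"
    using card_eq_dim[of ?S UNIV] by auto
  moreover have "columns ?A = ?S"
  proof -
    have "column c ?A = v (g c) - v 0" for c by (simp add: column_def vec_eq_iff)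
    then have "columns ?A = (\<lambda>x. x - v 0) ` v ` g ` UNIV"
      by (auto simp: columns_def)
    then show ?thesis using bij_betw_imp_surj_on[OF g] by simp
  qed
  ultimately have "\<exists>B. ?A ** B = mat 1"
    using matrix_right_invertible_span_columns[of ?A] by (simp add: span_vec_eq)
  then show ?thesis using invertible_right_inverse by blast
qed

lemma edge_coordinates:
  fixes v :: "nat \<Rightarrow> real^'n" and g :: "'n \<Rightarrow> nat"
  assumes g: "bij_betw g UNIV {1..CARD('n)}"
    and AB: "(\<chi> r c. (v (g c) - v 0) $ r) ** B = mat 1"
    and BA: "B ** (\<chi> r c. (v (g c) - v 0) $ r) = mat 1"
  defines "\<gamma> k y \<equiv> (B *v (y - v 0)) $ inv_into UNIV g k"
  shows "y - v 0 = (\<Sum>k\<in>{1..CARD('n)}. \<gamma> k y *\<^sub>R (v k - v 0))"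
    and "k \<in> {1..CARD('n)} \<Longrightarrow> j \<le> CARD('n) \<Longrightarrow> \<gamma> k (v j) = (if k = j then 1 else 0)"
proof -
  let ?A = "\<chi> r c. (v (g c) - v 0) $ r"
  let ?h = "inv_into UNIV g"
  have hg: "?h (g c) = c" for c
    using g by (simp add: bij_betw_def)
  have gh: "k \<in> {1..CARD('n)} \<Longrightarrow> g (?h k) = k" for k
    using g by (simp add: bij_betw_def f_inv_into_f)
  have A_mult: "?A *v x = (\<Sum>c\<in>UNIV. x$c *\<^sub>R (v (g c) - v 0))" for x
    by (simp add: matrix_mult_sum column_def vec_eq_iff scalar_mult_eq_scaleR)
  have "y - v 0 = ?A *v (B *v (y - v 0))"
    by (simp only: matrix_vector_mul_assoc AB matrix_vector_mul_lid)
  also have "\<dots> = (\<Sum>c\<in>UNIV. \<gamma> (g c) y *\<^sub>R (v (g c) - v 0))"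
    unfolding A_mult by (simp add: \<gamma>_def hg)
  also have "\<dots> = (\<Sum>k\<in>{1..CARD('n)}. \<gamma> k y *\<^sub>R (v k - v 0))"
    using sum.reindex_bij_betw[OF g, of "\<lambda>k. \<gamma> k y *\<^sub>R (v k - v 0)"] by simp
  finally show "y - v 0 = (\<Sum>k\<in>{1..CARD('n)}. \<gamma> k y *\<^sub>R (v k - v 0))" .
  assume k: "k \<in> {1..CARD('n)}" and j: "j \<le> CARD('n)"
  show "\<gamma> k (v j) = (if k = j then 1 else 0)"
  proof (cases "j = 0")
    case False
    then have j': "j \<in> {1..CARD('n)}" using j by auto
    have "?A *v axis (?h j) 1 = v j - v 0"
      unfolding A_mult axis_def by (simp add: if_distrib[of "\<lambda>t. t *\<^sub>R _"] gh[OF j'] cong: if_cong)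
    from this[symmetric] have "B *v (v j - v 0) = axis (?h j) 1"
      by (simp only: matrix_vector_mul_assoc BA matrix_vector_mul_lid)
    moreover have "?h k = ?h j \<longleftrightarrow> k = j"
      using gh[OF k] gh[OF j'] by metis
    ultimately show ?thesis by (simp add: \<gamma>_def axis_def)
  qed (use k in \<open>simp add: \<gamma>_def\<close>)
qed

section \<open>Primitive integer vectors\<close>

lemma of_int_divide_in_Ints_iff:
  assumes "k > 0"
  shows "(of_int a / of_int k :: real) \<in> \<int> \<longleftrightarrow> k dvd a"
proof
  assume "of_int a / of_int k \<in> (\<int> :: real set)"
  then obtain z where "of_int a / of_int k = (of_int z :: real)" by (elim Ints_cases)
  then have "(of_int a :: real) = of_int (z * k)" using assms by (simp add: field_simps)
  then have "a = z * k" by (simp only: of_int_eq_iff)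
  then show "k dvd a" by simp
qed (use assms in auto)

lemma primitive_int_vec_of_int:
  assumes "\<And>i. c$i = of_int (C i)"
  shows "primitive_int_vec c \<longleftrightarrow> (\<forall>k>1. \<exists>i. \<not> k dvd C i)"
  using assms by (simp add: primitive_int_vec_def of_int_divide_in_Ints_iff)

lemma Ints_vec_obtain_of_int:
  fixes c :: "real^'n"
  assumes "\<And>i. c$i \<in> \<int>"
  obtains C where "\<And>i. c$i = of_int (C i)"
  using assms that[of "\<lambda>i. \<lfloor>c$i\<rfloor>"] by (metis Ints_cases floor_of_int)

lemma primitive_int_vec_nonzero: "primitive_int_vec c \<Longrightarrow> c \<noteq> 0"
  unfolding primitive_int_vec_def by (force dest: spec[where x = 2])

lemma primitive_int_vec_scaleR_eq_1:
  fixes c :: "real^'n"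
  assumes c: "primitive_int_vec c" and tc: "primitive_int_vec (t *\<^sub>R c)" and t: "t > 0"
  shows "t = 1"
proof -
  obtain C where C: "\<And>i. c$i = of_int (C i)"
    using c Ints_vec_obtain_of_int unfolding primitive_int_vec_def by blast
  obtain C' where C': "\<And>i. (t *\<^sub>R c)$i = of_int (C' i)"
    using tc Ints_vec_obtain_of_int unfolding primitive_int_vec_def by blast
  obtain j where j: "c$j \<noteq> 0"
    using primitive_int_vec_nonzero[OF c] by (auto simp: vec_eq_iff)
  have "t = of_int (C' j) / of_int (C j)"
    using j C'[of j] by (simp add: C field_simps)
  then have "t \<in> \<rat>" by simp
  then obtain p q where q: "q > 0" and pq: "coprime p q" and t_pq: "t = of_int p / of_int q"
    by (rule Rats_cases')
  have p: "p > 0" using t q t_pq by (simp add: zero_less_divide_iff)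
  have C'_C: "q * C' i = p * C i" for i
  proof -
    have "(of_int (q * C' i) :: real) = of_int (p * C i)"
      using q C'[of i] by (simp add: C t_pq field_simps)
    then show ?thesis by (simp only: of_int_eq_iff)
  qed
  have "q dvd C i" for i
    using C'_C[of i] pq by (metis coprime_commute coprime_dvd_mult_right_iff dvd_triv_left)
  then have q1: "q = 1"
    using q c C by (force simp: primitive_int_vec_of_int)
  have "p dvd C' i" for i
    using C'_C[of i] q1 by simp
  then have "p = 1"
    using p tc C' by (force simp: primitive_int_vec_of_int)
  then show ?thesis using t_pq q1 by simp
qed

lemma Rats_vec_integral_multiple:
  fixes w :: "real^'n"
  assumes "\<And>j. w$j \<in> \<rat>"
  obtains D where "D > 0" and "\<And>j. D * w$j \<in> \<int>"
proof -
  have "\<exists>q::int. q > 0 \<and> of_int q * w$j \<in> \<int>" for j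
  proof -
    obtain a b where "b > 0" "w$j = of_int a / of_int b" using Rats_cases'[OF assms[of j]] by metis
    then show ?thesis by (intro exI[of _ b]) simp
  qed
  then obtain q where q: "\<And>j. q j > 0" and qw: "\<And>j. of_int (q j) * w$j \<in> \<int>" by metis
  define D where "D = (\<Prod>j\<in>UNIV. real_of_int (q j))"
  have D_w: "D * w$j = (\<Prod>k\<in>UNIV - {j}. real_of_int (q k)) * (of_int (q j) * w$j)" for j
    using prod.remove[of UNIV j "\<lambda>k. real_of_int (q k)"] by (simp add: D_def)
  have "D * w$j \<in> \<int>" for j
    unfolding D_w by (intro Ints_mult Ints_prod qw) auto
  moreover have "D > 0" unfolding D_def using q by (simp add: prod_pos)
  ultimately show thesis using that by blast
qed

lemma Ints_vec_primitive_multiple: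
  fixes c :: "real^'n"
  assumes int: "\<And>j. c$j \<in> \<int>" and c: "c \<noteq> 0"
  obtains m where "m > 0" and "primitive_int_vec (m *\<^sub>R c)"
proof -
  obtain C where C: "\<And>i. c$i = of_int (C i)" using Ints_vec_obtain_of_int[OF int] by blast
  define G where "G = Gcd (range C)"
  have G_dvd: "G dvd C i" for i unfolding G_def by simp
  have "G \<noteq> 0" using c C by (auto simp: G_def vec_eq_iff)
  then have G: "G > 0" unfolding G_def by (simp add: order_le_neq_trans)
  have mc: "((1 / of_int G) *\<^sub>R c)$i = of_int (C i div G)" for i
    using G_dvd[of i] G by (auto simp: C)
  have "\<exists>i. \<not> k dvd C i div G" if k: "k > 1" for k
  proof (rule ccontr)
    assume "\<not> ?thesis"
    then have k_dvd: "k dvd C i div G" for i by blast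
    have "G * k dvd C i" for i
    proof -
      obtain z where "C i = G * z" using G_dvd[of i] ..
      then show ?thesis using k_dvd[of i] G by simp
    qed
    then have "G * k dvd G" unfolding G_def by (intro Gcd_greatest) auto
    then show False using G k zdvd_mult_cancel1[of G k] by simp
  qed
  then have "primitive_int_vec ((1 / of_int G) *\<^sub>R c)"
    by (simp add: primitive_int_vec_of_int[OF mc])
  moreover have "1 / real_of_int G > 0" using G by simp
  ultimately show thesis using that by blast
qed

lemma Rats_vec_primitive_multiple:
  fixes w :: "real^'n"
  assumes "\<And>j. w$j \<in> \<rat>" and "w \<noteq> 0"
  obtains m where "m > 0" and "primitive_int_vec (m *\<^sub>R w)"
proof -
  obtain D where D: "D > 0" "\<And>j. D * w$j \<in> \<int>"
    using Rats_vec_integral_multiple assms(1) by blast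
  moreover have "D *\<^sub>R w \<noteq> 0" using D assms(2) by simp
  ultimately obtain m where "m > 0" "primitive_int_vec (m *\<^sub>R D *\<^sub>R w)"
    using Ints_vec_primitive_multiple[of "D *\<^sub>R w"] by auto
  with D show thesis by (intro that[of "m * D"]) auto
qed

section \<open>Homotheties and the invariants mu and tau\<close>

lemma face_of_homothety_iff:
  fixes a :: "'a::real_vector"
  assumes "t > 0"
  shows "(\<lambda>x. a + t *\<^sub>R x) ` F face_of (\<lambda>x. a + t *\<^sub>R x) ` Q \<longleftrightarrow> F face_of Q"
proof -
  have "inj ((*\<^sub>R) t :: 'a \<Rightarrow> 'a)" using assms by (auto intro: injI)
  moreover have "(\<lambda>x. a + t *\<^sub>R x) ` X = (+) a ` (*\<^sub>R) t ` X" for X by (simp add: image_image)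
  ultimately show ?thesis by (simp add: face_of_linear_image)
qed

lemma faces_homothety:
  fixes a :: "'a::real_vector"
  assumes t: "t > 0"
  shows "{G. G face_of (\<lambda>x. a + t *\<^sub>R x) ` Q} = (`) (\<lambda>x. a + t *\<^sub>R x) ` {F. F face_of Q}"
proof -
  let ?h = "\<lambda>x. a + t *\<^sub>R x"
  have "surj ?h"
    using t by (intro surjI[of _ "\<lambda>y. (1 / t) *\<^sub>R (y - a)"]) simp
  then have G_image: "G = ?h ` (?h -` G)" for G by (simp add: surj_image_vimage_eq)
  show ?thesis
  proof (intro equalityI subsetI)
    fix G assume "G \<in> {G. G face_of ?h ` Q}"
    then have "?h -` G face_of Q"
      using face_of_homothety_iff[OF t, of a "?h -` G" Q] G_image[of G] by simp
    then show "G \<in> (`) ?h ` {F. F face_of Q}" using G_image[of G] by blast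
  qed (use face_of_homothety_iff[OF t] in auto)
qed

lemma normal_cone_homothety:
  fixes a :: "real^'n"
  assumes "t > 0"
  shows "normal_cone ((\<lambda>x. a + t *\<^sub>R x) ` Q) ((\<lambda>x. a + t *\<^sub>R x) ` F) = normal_cone Q F"
  using assms by (simp add: normal_cone_def inner_add_right)

lemma normal_fan_homothety:
  fixes a :: "real^'n"
  assumes "t > 0"
  shows "normal_fan ((\<lambda>x. a + t *\<^sub>R x) ` Q) = normal_fan Q"
proof -
  let ?h = "\<lambda>x. a + t *\<^sub>R x"
  have "normal_fan (?h ` Q) = {normal_cone (?h ` Q) G |G. G \<in> {G. G face_of ?h ` Q} \<and> G \<noteq> {}}"
    by (simp add: normal_fan_def)
  also have "\<dots> = {normal_cone (?h ` Q) (?h ` F) |F. F face_of Q \<and> F \<noteq> {}}"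
    unfolding faces_homothety[OF assms] by blast
  also have "\<dots> = normal_fan Q"
    by (simp add: normal_fan_def normal_cone_homothety[OF assms])
  finally show ?thesis .
qed

lemma mu_eq_inverse:
  assumes m: "m > 0" and nonempty: "layer P m \<noteq> {}" and empty: "\<And>s. m < s \<Longrightarrow> layer P s = {}"
  shows "mu P = inverse m"
proof -
  have "Sup {s. s > 0 \<and> layer P s \<noteq> {}} = m"
    by (rule cSup_eq_maximum) (use m nonempty empty in \<open>auto simp: not_le[symmetric]\<close>)
  then show ?thesis by (simp add: mu_def)
qed

lemma tau_eq_inverse:
  assumes m: "m > 0" and P: "P \<noteq> {}" "convex P"
    and empty: "\<And>s. m < s \<Longrightarrow> layer P s = {}"
    and homothetic: "\<And>s. 0 < s \<Longrightarrow> s < m \<Longrightarrow> \<exists>a t. t > 0 \<and> layer P s = (\<lambda>x. a + t *\<^sub>R x) ` P"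
  shows "tau P = inverse m"
proof -
  let ?T = "{s. s > 0 \<and> normal_fan (layer P s) = normal_fan P}"
  have "normal_fan P \<noteq> {}"
    using P face_of_refl by (auto simp: normal_fan_def)
  then have "?T \<subseteq> {0<..m}"
    using empty by (force simp: normal_fan_def not_le[symmetric])
  then have "bdd_above ?T" by (meson bdd_above_Ioc bdd_above_mono)
  moreover have "{0<..<m} \<subseteq> ?T"
    using homothetic normal_fan_homothety by fastforce
  moreover have "{0<..<m} \<noteq> {}" using m by (simp add: dense)
  ultimately have "Sup {0<..<m} \<le> Sup ?T" and "?T \<noteq> {}"
    using cSup_subset_mono[of "{0<..<m}" ?T] by blast+
  moreover have "Sup ?T \<le> m"
    using \<open>?T \<noteq> {}\<close> \<open>?T \<subseteq> {0<..m}\<close> by (intro cSup_least) auto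
  ultimately have "Sup ?T = m"
    using m by simp
  then show ?thesis by (simp add: tau_def)
qed

section \<open>Lattice distances of a rational simplex\<close>

lemma lattice_dist_eqI:
  assumes "facet_ineq P F c b" and "\<And>c' b'. facet_ineq P F c' b' \<Longrightarrow> c' = c \<and> b' = b"
  shows "lattice_dist P F y = c \<bullet> y - b"
  unfolding lattice_dist_def
proof (rule the_equality)
  show "\<exists>c' b'. facet_ineq P F c' b' \<and> c \<bullet> y - b = c' \<bullet> y - b'" using assms(1) by blast
next
  fix d assume "\<exists>c' b'. facet_ineq P F c' b' \<and> d = c' \<bullet> y - b'"
  then show "d = c \<bullet> y - b" using assms(2) by blast
qed

locale barycentric_simplex =
  fixes v :: "nat \<Rightarrow> real^'n" and w :: "nat \<Rightarrow> real^'n" and \<beta> :: "nat \<Rightarrow> real"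
  assumes inj: "inj_on v {..CARD('n)}"
    and indep: "\<not> affine_dependent (v ` {..CARD('n)})"
    and w_Rats: "\<And>i j. i \<le> CARD('n) \<Longrightarrow> w i $ j \<in> \<rat>"
    and affine_vertex: "\<And>i j. i \<le> CARD('n) \<Longrightarrow> j \<le> CARD('n) \<Longrightarrow> w i \<bullet> v j + \<beta> i = (if i = j then 1 else 0)"
    and sum_affine: "\<And>y. (\<Sum>i\<le>CARD('n). w i \<bullet> y + \<beta> i) = 1"
    and affine_expansion: "\<And>y. (\<Sum>i\<le>CARD('n). (w i \<bullet> y + \<beta> i) *\<^sub>R v i) = y"

lemma rational_simplex_barycentric:
  fixes v :: "nat \<Rightarrow> real^'n"
  assumes rat: "\<forall>i\<le>CARD('n). \<forall>j. v i $ j \<in> \<rat>"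
    and inj: "inj_on v {..CARD('n)}"
    and indep: "\<not> affine_dependent (v ` {..CARD('n)})"
  obtains w \<beta> where "barycentric_simplex v w \<beta>"
proof -
  let ?N = "CARD('n)"
  obtain g :: "'n \<Rightarrow> nat" where g: "bij_betw g UNIV {1..?N}"
    using finite_same_card_bij[of "UNIV :: 'n set" "{1..?N}"] by auto
  define h where "h = inv_into UNIV g"
  define A :: "real^'n^'n" where "A = (\<chi> r c. (v (g c) - v 0) $ r)"
  obtain B where AB: "A ** B = mat 1" and BA: "B ** A = mat 1"
    using simplex_edge_matrix_invertible[OF g inj indep] unfolding A_def invertible_def by blast
  have "A$r$c \<in> \<rat>" for r c
    using rat bij_betw_apply[OF g] by (force simp: A_def)
  then have B_Rats: "B$r$c \<in> \<rat>" for r c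
    using right_inverse_Rats[OF AB] by blast
  txt \<open>For k \<ge> 1 the k-th coordinate is the entry of B *v (y - v 0) belonging to the edge
    v k - v 0, and the 0-th coordinate is 1 minus their sum.\<close>
  define w where "w i = (if i = 0 then - (\<Sum>k\<in>{1..?N}. row (h k) B) else row (h i) B)" for i
  define \<beta> where "\<beta> i = (if i = 0 then 1 + (\<Sum>k\<in>{1..?N}. row (h k) B \<bullet> v 0) else - (row (h i) B \<bullet> v 0))" for i
  define f where "f i y = w i \<bullet> y + \<beta> i" for i y
  have f_pos: "f k y = (B *v (y - v 0)) $ h k" if "k \<in> {1..?N}" for k y
    using that by (simp add: f_def w_def \<beta>_def inner_vec_def matrix_vector_mult_def row_def
        algebra_simps sum_subtractf)
  have f_0: "f 0 y = 1 - (\<Sum>k\<in>{1..?N}. f k y)" for y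
    by (simp add: f_def w_def \<beta>_def inner_sum_left sum_negf sum_subtractf sum.distrib)
  note edge = edge_coordinates[OF g AB[unfolded A_def] BA[unfolded A_def], folded h_def]
  have vertices: "{..?N} = insert 0 {1..?N}" by auto
  have "(\<Sum>i\<le>?N. f i y *\<^sub>R v i) = f 0 y *\<^sub>R v 0 + (\<Sum>k\<in>{1..?N}. f k y *\<^sub>R v k)" for y
    by (simp add: vertices)
  also have "\<dots> y = v 0 + (\<Sum>k\<in>{1..?N}. f k y *\<^sub>R (v k - v 0))" for y
    by (simp add: f_0 scaleR_diff_left scaleR_diff_right scaleR_sum_left sum_subtractf)
  also have "\<dots> y = y" for y
  proof -
    have "(\<Sum>k\<in>{1..?N}. f k y *\<^sub>R (v k - v 0)) = (\<Sum>k\<in>{1..?N}. (B *v (y - v 0)) $ h k *\<^sub>R (v k - v 0))"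
      by (intro sum.cong) (simp_all add: f_pos)
    then show ?thesis using edge(1)[of y] by simp
  qed
  finally have f_expansion: "(\<Sum>i\<le>?N. f i y *\<^sub>R v i) = y" for y .
  have f_vertex: "f i (v j) = (if i = j then 1 else 0)" if "i \<le> ?N" "j \<le> ?N" for i j
  proof (cases "i = 0")
    case True
    have "(\<Sum>k\<in>{1..?N}. f k (v j)) = (\<Sum>k\<in>{1..?N}. if k = j then 1 else 0)"
      using that edge(2) by (intro sum.cong) (auto simp: f_pos)
    also have "\<dots> = (if j = 0 then 0 else 1)"
      using that by auto
    finally show ?thesis using True f_0 by simp
  qed (use that edge(2) in \<open>auto simp: f_pos\<close>)
  have "w i $ j \<in> \<rat>" for i j
    by (auto simp: w_def row_def intro!: B_Rats)
  moreover have "(\<Sum>i\<le>?N. f i y) = 1" for y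
    by (simp add: vertices f_0)
  ultimately show thesis
    using that[of w \<beta>] inj indep f_vertex f_expansion
    unfolding f_def barycentric_simplex_def by blast
qed

context barycentric_simplex
begin

definition coord :: "nat \<Rightarrow> real^'n \<Rightarrow> real" where
  "coord i y = w i \<bullet> y + \<beta> i"

abbreviation \<Delta> :: "(real^'n) set" where
  "\<Delta> \<equiv> convex hull (v ` {..CARD('n)})"

abbreviation facet :: "nat \<Rightarrow> (real^'n) set" where
  "facet i \<equiv> convex hull (v ` ({..CARD('n)} - {i}))"

lemma coord_vertex: "i \<le> CARD('n) \<Longrightarrow> j \<le> CARD('n) \<Longrightarrow> coord i (v j) = (if i = j then 1 else 0)"
  using affine_vertex by (simp add: coord_def)

lemma sum_coord: "(\<Sum>i\<le>CARD('n). coord i y) = 1"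
  using sum_affine by (simp add: coord_def)

lemma coord_expansion: "(\<Sum>i\<le>CARD('n). coord i y *\<^sub>R v i) = y"
  using affine_expansion by (simp add: coord_def)

lemma coord_affine: "coord i ((1 - t) *\<^sub>R a + t *\<^sub>R b) = (1 - t) * coord i a + t * coord i b"
  by (simp add: coord_def algebra_simps)

lemma coord_affine_combination:
  assumes J: "J \<subseteq> {..CARD('n)}" and "sum \<mu> J = 1" and i: "i \<le> CARD('n)"
  shows "coord i (\<Sum>j\<in>J. \<mu> j *\<^sub>R v j) = (if i \<in> J then \<mu> i else 0)"
proof -
  have "coord i (\<Sum>j\<in>J. \<mu> j *\<^sub>R v j) = (\<Sum>j\<in>J. \<mu> j * (w i \<bullet> v j)) + \<beta> i * sum \<mu> J"
    using assms(2) by (simp add: coord_def inner_sum_right)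
  also have "\<dots> = (\<Sum>j\<in>J. \<mu> j * coord i (v j))"
    by (simp add: coord_def sum_distrib_left sum.distrib algebra_simps)
  also have "\<dots> = (\<Sum>j\<in>J. if j = i then \<mu> j else 0)"
    using J i by (intro sum.cong) (auto simp: coord_vertex)
  also have "\<dots> = (if i \<in> J then \<mu> i else 0)"
    using finite_subset[OF J] by simp
  finally show ?thesis .
qed

lemma convex_hull_vertices_eq:
  assumes J: "J \<subseteq> {..CARD('n)}"
  shows "convex hull (v ` J) = {y. (\<forall>i\<le>CARD('n). 0 \<le> coord i y) \<and> (\<forall>i\<in>{..CARD('n)} - J. coord i y = 0)}"
proof (intro equalityI subsetI)
  have fin: "finite J" using J finite_subset by blast
  fix y assume "y \<in> convex hull (v ` J)"
  then obtain u where u0: "\<forall>x\<in>v`J. 0 \<le> u x" and u1: "sum u (v`J) = 1" and uy: "(\<Sum>x\<in>v`J. u x *\<^sub>R x) = y"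
    using convex_hull_finite[of "v`J"] fin by auto
  have inj_J: "inj_on v J" using inj J inj_on_subset by blast
  have "(\<Sum>j\<in>J. u (v j)) = 1" and "y = (\<Sum>j\<in>J. u (v j) *\<^sub>R v j)"
    using u1 uy by (simp_all add: sum.reindex[OF inj_J])
  then have "coord i y = (if i \<in> J then u (v i) else 0)" if "i \<le> CARD('n)" for i
    using coord_affine_combination[OF J _ that] by simp
  then show "y \<in> {y. (\<forall>i\<le>CARD('n). 0 \<le> coord i y) \<and> (\<forall>i\<in>{..CARD('n)} - J. coord i y = 0)}"
    using u0 by auto
next
  fix y assume y: "y \<in> {y. (\<forall>i\<le>CARD('n). 0 \<le> coord i y) \<and> (\<forall>i\<in>{..CARD('n)} - J. coord i y = 0)}"
  have fin: "finite J" using J finite_subset by blast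
  have "(\<Sum>i\<le>CARD('n). coord i y *\<^sub>R v i) = (\<Sum>i\<in>J. coord i y *\<^sub>R v i)"
    using y J by (intro sum.mono_neutral_right) auto
  then have y_eq: "y = (\<Sum>i\<in>J. coord i y *\<^sub>R v i)"
    by (simp add: coord_expansion)
  have "(\<Sum>i\<le>CARD('n). coord i y) = (\<Sum>i\<in>J. coord i y)"
    using y J by (intro sum.mono_neutral_right) auto
  then have "(\<Sum>i\<in>J. coord i y) = 1"
    by (simp add: sum_coord)
  moreover have "0 \<le> coord i y" if "i \<in> J" for i
    using y J that by auto
  ultimately have "(\<Sum>i\<in>J. coord i y *\<^sub>R v i) \<in> convex hull (v ` J)"
    by (intro convex_sum[OF fin convex_convex_hull]) (simp_all add: hull_inc)
  then show "y \<in> convex hull (v ` J)" using y_eq by simp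
qed

lemma simplex_eq: "\<Delta> = {y. \<forall>i\<le>CARD('n). 0 \<le> coord i y}"
  using convex_hull_vertices_eq[of "{..CARD('n)}"] by simp

lemma facet_eq: "i \<le> CARD('n) \<Longrightarrow> facet i = {y \<in> \<Delta>. coord i y = 0}"
  using convex_hull_vertices_eq[of "{..CARD('n)} - {i}"] by (auto simp: simplex_eq)

lemma facets_simplex: "{F. F facet_of \<Delta>} = facet ` {..CARD('n)}"
proof -
  have "card (v ` {..CARD('n)}) \<ge> 2"
    using inj by (simp add: card_image)
  moreover have "v ` {..CARD('n)} - {v i} = v ` ({..CARD('n)} - {i})" if "i \<le> CARD('n)" for i
    using inj that by (auto simp: inj_on_def)
  ultimately show ?thesis
    by (auto simp: facet_of_convex_hull_affine_independent_alt[OF indep])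
qed

definition height :: "nat \<Rightarrow> real" where
  "height i = lattice_dist \<Delta> (facet i) (v i)"

lemma w_nonzero:
  assumes i: "i \<le> CARD('n)"
  shows "w i \<noteq> 0"
proof
  assume "w i = 0"
  obtain j where j: "j \<le> CARD('n)" "j \<noteq> i"
    using i by (metis Suc_leI le0 zero_less_card_finite n_not_Suc_n)
  have "coord i (v i) = coord i (v j)" using \<open>w i = 0\<close> by (simp add: coord_def)
  then show False using coord_vertex[OF i i] coord_vertex[OF i j(1)] j(2) by simp
qed

lemma affine_functional_eq_coord:
  assumes i: "i \<le> CARD('n)" and vanish: "\<And>j. j \<le> CARD('n) \<Longrightarrow> j \<noteq> i \<Longrightarrow> c \<bullet> v j = b"
  shows "c \<bullet> y - b = (c \<bullet> v i - b) * coord i y"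
proof -
  have "c \<bullet> y - b = c \<bullet> (\<Sum>j\<le>CARD('n). coord j y *\<^sub>R v j) - b * (\<Sum>j\<le>CARD('n). coord j y)"
    by (simp add: coord_expansion sum_coord)
  also have "\<dots> = (\<Sum>j\<le>CARD('n). coord j y * (c \<bullet> v j - b))"
    by (simp add: inner_sum_right sum_distrib_left sum_subtractf algebra_simps)
  also have "\<dots> = (\<Sum>j\<le>CARD('n). if j = i then coord i y * (c \<bullet> v i - b) else 0)"
    using vanish by (intro sum.cong) auto
  finally show ?thesis using i by simp
qed

lemma facet_ineq_eq_scaled_coord:
  assumes i: "i \<le> CARD('n)" and ineq: "facet_ineq \<Delta> (facet i) c b"
  shows "\<exists>\<alpha>>0. c = \<alpha> *\<^sub>R w i \<and> b = - \<alpha> * \<beta> i"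
proof -
  have prim: "primitive_int_vec c" and le: "\<Delta> \<subseteq> {x. b \<le> c \<bullet> x}"
    and facet: "facet i = \<Delta> \<inter> {x. c \<bullet> x = b}"
    using ineq unfolding facet_ineq_def by auto
  define \<alpha> where "\<alpha> = c \<bullet> v i - b"
  have "c \<bullet> v j = b" if "j \<le> CARD('n)" "j \<noteq> i" for j
    using facet hull_inc[of "v j" "v ` ({..CARD('n)} - {i})"] that by auto
  then have c_b: "c \<bullet> y - b = \<alpha> * coord i y" for y
    unfolding \<alpha>_def using affine_functional_eq_coord[OF i] by blast
  have b: "b = - \<alpha> * \<beta> i" using c_b[of 0] by (simp add: coord_def)
  have "(c - \<alpha> *\<^sub>R w i) \<bullet> y = 0" for y
    using c_b[of y] b by (simp add: coord_def algebra_simps)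
  then have c: "c = \<alpha> *\<^sub>R w i"
    by (metis eq_iff_diff_eq_0 inner_eq_zero_iff)
  have "\<alpha> \<ge> 0"
    using le hull_inc[of "v i" "v ` {..CARD('n)}"] i by (auto simp: \<alpha>_def)
  moreover have "\<alpha> \<noteq> 0" using primitive_int_vec_nonzero[OF prim] c by auto
  ultimately show ?thesis using b c by (intro exI[of _ \<alpha>]) auto
qed

lemma facet_ineq_exists:
  assumes i: "i \<le> CARD('n)"
  shows "\<exists>c b. facet_ineq \<Delta> (facet i) c b"
proof -
  obtain m where m: "m > 0" "primitive_int_vec (m *\<^sub>R w i)"
    using Rats_vec_primitive_multiple[OF w_Rats[OF i] w_nonzero[OF i]] by blast
  have m_coord: "(m *\<^sub>R w i) \<bullet> x - (- m * \<beta> i) = m * coord i x" for x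
    by (simp add: coord_def algebra_simps)
  have "facet_ineq \<Delta> (facet i) (m *\<^sub>R w i) (- m * \<beta> i)"
    unfolding facet_ineq_def
  proof (intro conjI)
    show "facet i facet_of \<Delta>" using facets_simplex i by auto
    show "\<Delta> \<subseteq> {x. - m * \<beta> i \<le> (m *\<^sub>R w i) \<bullet> x}"
    proof
      fix x assume "x \<in> \<Delta>"
      then have "0 \<le> m * coord i x" using m i by (simp add: simplex_eq)
      then show "x \<in> {x. - m * \<beta> i \<le> (m *\<^sub>R w i) \<bullet> x}" using m_coord[of x] by simp
    qed
    have "(m *\<^sub>R w i) \<bullet> x = - m * \<beta> i \<longleftrightarrow> coord i x = 0" for x
      using m_coord[of x] m by (smt (verit) mult_eq_0_iff)
    then show "facet i = \<Delta> \<inter> {x. (m *\<^sub>R w i) \<bullet> x = - m * \<beta> i}"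
      by (auto simp: facet_eq[OF i])
  qed (use m in simp)
  then show ?thesis by blast
qed

lemma lattice_dist_facet:
  assumes i: "i \<le> CARD('n)"
  shows "lattice_dist \<Delta> (facet i) y = height i * coord i y" and "height i > 0"
proof -
  obtain c b where ineq: "facet_ineq \<Delta> (facet i) c b" using facet_ineq_exists[OF i] by blast
  obtain \<alpha> where \<alpha>: "\<alpha> > 0" "c = \<alpha> *\<^sub>R w i" "b = - \<alpha> * \<beta> i"
    using facet_ineq_eq_scaled_coord[OF i ineq] by blast
  have unique: "c' = c \<and> b' = b" if ineq': "facet_ineq \<Delta> (facet i) c' b'" for c' b'
  proof -
    obtain \<alpha>' where \<alpha>': "\<alpha>' > 0" "c' = \<alpha>' *\<^sub>R w i" "b' = - \<alpha>' * \<beta> i"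
      using facet_ineq_eq_scaled_coord[OF i ineq'] by blast
    have "c' = (\<alpha>' / \<alpha>) *\<^sub>R c" using \<alpha> \<alpha>' by simp
    then have "\<alpha>' / \<alpha> = 1"
      using primitive_int_vec_scaleR_eq_1[of c "\<alpha>' / \<alpha>"] ineq ineq' \<alpha> \<alpha>'
      by (simp add: facet_ineq_def)
    then show ?thesis using \<alpha> \<alpha>' by simp
  qed
  have dist: "lattice_dist \<Delta> (facet i) y = \<alpha> * coord i y" for y
    using lattice_dist_eqI[OF ineq unique] \<alpha> by (simp add: coord_def algebra_simps)
  show "height i > 0" unfolding height_def dist using \<alpha> coord_vertex[OF i i] by simp
  show "lattice_dist \<Delta> (facet i) y = height i * coord i y"
    unfolding height_def dist using coord_vertex[OF i i] by simp
qed

lemma dP_simplex: "dP \<Delta> y = Min ((\<lambda>i. height i * coord i y) ` {..CARD('n)})"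
proof -
  have "(\<lambda>F. lattice_dist \<Delta> F y) ` {F. F facet_of \<Delta>} = (\<lambda>i. height i * coord i y) ` {..CARD('n)}"
    unfolding facets_simplex image_image by (intro image_cong) (simp_all add: lattice_dist_facet)
  then show ?thesis by (simp add: dP_def cInf_eq_Min)
qed

lemma mem_layer_simplex_iff: "y \<in> layer \<Delta> s \<longleftrightarrow> (\<forall>i\<le>CARD('n). s \<le> height i * coord i y)"
  by (auto simp: layer_def dP_simplex)

abbreviation \<sigma> :: real where
  "\<sigma> \<equiv> \<Sum>i\<le>CARD('n). 1 / height i"

lemma \<sigma>_pos: "\<sigma> > 0"
  by (intro sum_pos) (simp_all add: lattice_dist_facet)

definition centre :: "real^'n" where
  "centre = (\<Sum>i\<le>CARD('n). (1 / (height i * \<sigma>)) *\<^sub>R v i)"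

lemma height_coord_centre:
  assumes i: "i \<le> CARD('n)"
  shows "height i * coord i centre = 1 / \<sigma>"
proof -
  have "(\<Sum>i\<le>CARD('n). 1 / (height i * \<sigma>)) = \<sigma> / \<sigma>"
    by (simp only: sum_divide_distrib divide_divide_eq_left)
  then have "(\<Sum>i\<le>CARD('n). 1 / (height i * \<sigma>)) = 1"
    using \<sigma>_pos by simp
  then have "coord i centre = 1 / (height i * \<sigma>)"
    unfolding centre_def using coord_affine_combination[OF order_refl _ i] i by simp
  then show ?thesis using lattice_dist_facet(2)[OF i] by simp
qed

lemma layer_simplex_empty:
  assumes "1 / \<sigma> < s"
  shows "layer \<Delta> s = {}"
proof (rule ccontr)
  assume "layer \<Delta> s \<noteq> {}"
  then obtain y where y: "y \<in> layer \<Delta> s" by blast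
  have "s * (1 / height i) \<le> coord i y" if i: "i \<le> CARD('n)" for i
    using y i lattice_dist_facet(2)[OF i]
    by (simp add: mem_layer_simplex_iff divide_le_eq mult.commute)
  then have "s * \<sigma> \<le> 1"
    using sum_mono[of "{..CARD('n)}" "\<lambda>i. s * (1 / height i)" "\<lambda>i. coord i y"]
    by (simp add: sum_coord sum_distrib_left)
  then show False using assms \<sigma>_pos by (simp add: divide_less_eq mult.commute)
qed

lemma layer_simplex_homothetic:
  assumes s: "0 < s" "s < 1 / \<sigma>"
  defines "t \<equiv> 1 - s * \<sigma>"
  shows "t > 0" and "layer \<Delta> s = (\<lambda>x. (1 - t) *\<^sub>R centre + t *\<^sub>R x) ` \<Delta>"
proof -
  show t: "t > 0" using s \<sigma>_pos by (simp add: t_def field_simps)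
  have "s \<le> height i * coord i ((1 - t) *\<^sub>R centre + t *\<^sub>R x) \<longleftrightarrow> 0 \<le> coord i x"
    if i: "i \<le> CARD('n)" for i x
  proof -
    have "height i * coord i ((1 - t) *\<^sub>R centre + t *\<^sub>R x)
        = (1 - t) * (height i * coord i centre) + t * (height i * coord i x)"
      unfolding coord_affine by (simp add: algebra_simps)
    also have "\<dots> = s + (t * height i) * coord i x"
      using height_coord_centre[OF i] \<sigma>_pos by (simp add: t_def field_simps)
    finally show ?thesis
      using t lattice_dist_facet(2)[OF i] mult_le_cancel_left_pos[of "t * height i" 0 "coord i x"]
      by simp
  qed
  then have mem: "(1 - t) *\<^sub>R centre + t *\<^sub>R x \<in> layer \<Delta> s \<longleftrightarrow> x \<in> \<Delta>" for x
    unfolding mem_layer_simplex_iff by (simp add: simplex_eq)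
  show "layer \<Delta> s = (\<lambda>x. (1 - t) *\<^sub>R centre + t *\<^sub>R x) ` \<Delta>"
  proof (intro equalityI subsetI)
    fix y assume y: "y \<in> layer \<Delta> s"
    define x where "x = (1 / t) *\<^sub>R (y - (1 - t) *\<^sub>R centre)"
    have "y = (1 - t) *\<^sub>R centre + t *\<^sub>R x" using t by (simp add: x_def)
    then show "y \<in> (\<lambda>x. (1 - t) *\<^sub>R centre + t *\<^sub>R x) ` \<Delta>" using y mem[of x] by blast
  qed (use mem in auto)
qed

lemma mu_simplex: "mu \<Delta> = \<sigma>"
proof -
  have "mu \<Delta> = inverse (1 / \<sigma>)"
  proof (rule mu_eq_inverse)
    have "centre \<in> layer \<Delta> (1 / \<sigma>)"
      by (simp add: mem_layer_simplex_iff height_coord_centre)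
    then show "layer \<Delta> (1 / \<sigma>) \<noteq> {}" by blast
  qed (use \<sigma>_pos layer_simplex_empty in auto)
  then show ?thesis by simp
qed

lemma tau_simplex: "tau \<Delta> = \<sigma>"
proof -
  have "tau \<Delta> = inverse (1 / \<sigma>)"
  proof (rule tau_eq_inverse)
    fix s assume "0 < s" "s < 1 / \<sigma>"
    then show "\<exists>a t. t > 0 \<and> layer \<Delta> s = (\<lambda>x. a + t *\<^sub>R x) ` \<Delta>"
      using layer_simplex_homothetic by blast
  qed (use \<sigma>_pos layer_simplex_empty in auto)
  then show ?thesis by simp
qed

end

theorem proposition3p9:
  fixes v :: "nat \<Rightarrow> real^'n" and P :: "(real^'n) set"
  assumes rat: "\<forall>i\<le>CARD('n). \<forall>j. v i $ j \<in> \<rat>"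
    and inj: "inj_on v {..CARD('n)}"
    and indep: "\<not> affine_dependent (v ` {..CARD('n)})"
    and P_def: "P = convex hull (v ` {..CARD('n)})"
  shows "tau P = (\<Sum>i\<le>CARD('n). 1 / lattice_dist P (convex hull (v ` ({..CARD('n)} - {i}))) (v i))
       \<and> mu P = (\<Sum>i\<le>CARD('n). 1 / lattice_dist P (convex hull (v ` ({..CARD('n)} - {i}))) (v i))"
proof -
  obtain w \<beta> where "barycentric_simplex v w \<beta>"
    using rational_simplex_barycentric[OF rat inj indep] .
  then interpret barycentric_simplex v w \<beta> .
  show ?thesis
    using tau_simplex mu_simplex by (simp add: P_def height_def)
qed

end
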